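(* Fix $p\in(1/2,1]$, $C\in\mathbb{R}$, $t>0$, and write $N(t)=\lfloor (p-q)(t-Ct^{1/2})\rfloor$. Consider three ASEPs coupled by the basic coupling: $x$ started from $x_n(0)=-n-N(t)$ ($n\ge1$), $x_n(0)=-n$ ($-N(t)\le n\le0$); $x^A$ started from $x^A_n(0)=-n-N(t)$ ($n\ge1$); $x^B$ started from $x^B_n(0)=-n$ ($n\ge -N(t)$). Let $y_n(s)=\min\{x^A_n(s),x^B_n(s)\}$. Then for all $n\ge1$ and $s\ge0$: in TASEP ($p=1$), $y_n(s)=x_n(s)$; in ASEP (any $p\in(1/2,1]$), $y_n(s)\ge x_n(s)$.
   Context: ASEP on $\mathbb{Z}$ with parameter $p\in(1/2,1]$, $q=1-p$; TASEP is $p=1$. Particles carry integer labels, $x_n(s)$ being the position at time $s$ of the particle labeled $n$, with $x_{n+1}(s)<x_n(s)$. Basic coupling: all processes are constructed from one common family of independent Poisson processes $(P^{i,i+1})_{i\in\mathbb{Z}}$ of rate $p$ and $(P^{i,i-1})_{i\in\mathbb{Z}}$ of rate $q$; whenever $P^{i,i\pm1}$ jumps, in each process a particle at $i$ moves to $i\pm1$ if that site is empty. *)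

theory Defs
  imports Complex_Main
begin

text \<open>A clock realization of the basic coupling is a pair of families of ring-time sets:
  R i = jump times of the Poisson process P^{i,i+1} (rate p),
  L i = jump times of the Poisson process P^{i,i-1} (rate q).\<close>

definition right_const :: "(real \<Rightarrow> int) \<Rightarrow> real \<Rightarrow> bool" where
  "right_const f t \<longleftrightarrow> (\<exists>\<epsilon>>0. \<forall>s\<in>{t..t+\<epsilon>}. f s = f t)"

definition has_left_val :: "(real \<Rightarrow> int) \<Rightarrow> real \<Rightarrow> int \<Rightarrow> bool" where
  "has_left_val f t v \<longleftrightarrow> (\<exists>\<epsilon>>0. \<forall>s\<in>{t-\<epsilon><..<t}. f s = v)"

definition left_val :: "(real \<Rightarrow> int) \<Rightarrow> real \<Rightarrow> int" where
  "left_val f t = (THE v. has_left_val f t v)"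

text \<open>Almost-sure properties of the family of independent Poisson clocks:
  ring times are positive, locally finite, no two clocks ring simultaneously, and
  (Harris condition) for every time horizon T there are bonds arbitrarily far to the
  left and to the right that carry no ring in [0,T].\<close>

definition clocks_ok :: "(int \<Rightarrow> real set) \<Rightarrow> (int \<Rightarrow> real set) \<Rightarrow> bool" where
  "clocks_ok R L \<longleftrightarrow>
     (\<forall>i. R i \<subseteq> {0<..} \<and> L i \<subseteq> {0<..}) \<and>
     (\<forall>i T. finite (R i \<inter> {0..T}) \<and> finite (L i \<inter> {0..T})) \<and>
     (\<forall>i j. i \<noteq> j \<longrightarrow> R i \<inter> R j = {} \<and> L i \<inter> L j = {}) \<and>
     (\<forall>i j. R i \<inter> L j = {}) \<and>
     (\<forall>T K. (\<exists>i\<le>K. (R i \<union> L (i+1)) \<inter> {0..T} = {}) \<and>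
            (\<exists>i\<ge>K. (R i \<union> L (i+1)) \<inter> {0..T} = {}))"

text \<open>X is a labeled ASEP trajectory (X n s = position of the particle labeled n at
  time s, labels in Lab) driven by the clocks R, L, started from x0: each X n is a
  right-continuous step function with left limits, and at each time t>0 the particle
  at site a (its position just before t) jumps to a+1 iff R a rings at t and a+1 was
  empty just before t, jumps to a-1 iff L a rings at t and a-1 was empty just before t,
  and otherwise stays.\<close>

definition asep_traj :: "(int \<Rightarrow> real set) \<Rightarrow> (int \<Rightarrow> real set) \<Rightarrow> int set \<Rightarrow>
    (int \<Rightarrow> int) \<Rightarrow> (int \<Rightarrow> real \<Rightarrow> int) \<Rightarrow> bool" where
  "asep_traj R L Lab x0 X \<longleftrightarrow>
     (\<forall>n\<in>Lab. X n 0 = x0 n \<and> (\<forall>t\<ge>0. right_const (X n) t) \<and>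
               (\<forall>t>0. \<exists>v. has_left_val (X n) t v)) \<and>
     (\<forall>n\<in>Lab. \<forall>t>0.
        (let a = left_val (X n) t; occ = {left_val (X m) t | m. m \<in> Lab} in
          X n t = (if t \<in> R a \<and> a + 1 \<notin> occ then a + 1
                   else if t \<in> L a \<and> a - 1 \<notin> occ then a - 1 else a)))"

end

theory Submission
  imports Defs
begin

(* The argument is pathwise. Particles never overtake one another, so positions are strictly
   decreasing in the label, and the site that blocks a jump is occupied by the neighbouring label.
   For ASEP, X stays labelwise below XA and below XB (attractiveness of the basic coupling); the
   comparison runs by induction over the ring times on a finite block of labels, closed off by a
   bond that, by the Harris condition, no clock crosses before the time considered. In TASEP only
   right jumps occur and a particle reacts only to the one ahead of it. Then X agrees with XB on
   the labels -N..0, and X_n = min XA_n XB_n is preserved: when X_n is blocked by X_(n-1), the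
   process among XA, XB realising the minimum at label n - 1 blocks its particle n at the same
   site. *)

section \<open>Step functions of time\<close>

lemma has_left_val_iff_eventually:
  "has_left_val f t v \<longleftrightarrow> eventually (\<lambda>s. f s = v) (at_left t)"
proof
  assume "has_left_val f t v"
  then obtain e where "e > 0" "\<forall>s\<in>{t-e<..<t}. f s = v"
    unfolding has_left_val_def by blast
  then show "eventually (\<lambda>s. f s = v) (at_left t)"
    by (intro eventually_at_leftI[of "t - e"]) auto
next
  assume "eventually (\<lambda>s. f s = v) (at_left t)"
  then obtain b where "b < t" "\<forall>s>b. s < t \<longrightarrow> f s = v"
    unfolding eventually_at_left_field by blast
  then show "has_left_val f t v"
    unfolding has_left_val_def by (intro exI[of _ "t - b"]) auto
qed

lemma left_val_eq:
  assumes "has_left_val f t v"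
  shows "left_val f t = v"
proof -
  have "w = v" if "has_left_val f t w" for w
  proof -
    have "eventually (\<lambda>s. f s = v \<and> f s = w) (at_left t)"
      using assms that by (simp add: has_left_val_iff_eventually eventually_conj_iff)
    then show ?thesis
      using eventually_happens' trivial_limit_at_left_real by fastforce
  qed
  then show ?thesis
    unfolding left_val_def using assms by blast
qed

lemma left_vals_inherit:
  assumes "0 < t" "has_left_val f t v" "has_left_val g t w"
    and "\<forall>s\<in>{0..<t}. Q (f s) (g s)"
  shows "Q v w"
proof -
  have "eventually (\<lambda>s. s \<in> {0<..<t}) (at_left t)"
    using assms(1) by (rule eventually_at_left_real)
  with assms(2,3) have "eventually (\<lambda>s. s \<in> {0<..<t} \<and> f s = v \<and> g s = w) (at_left t)"
    by (simp add: has_left_val_iff_eventually eventually_conj_iff)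
  then obtain s where "s \<in> {0<..<t}" "f s = v" "g s = w"
    using eventually_happens' trivial_limit_at_left_real by blast
  then show ?thesis
    using assms(4) by force
qed

lemma has_left_val_min:
  "has_left_val f t v \<Longrightarrow> has_left_val g t w \<Longrightarrow> has_left_val (\<lambda>s. min (f s) (g s)) t (min v w)"
  unfolding has_left_val_iff_eventually by (auto elim: eventually_elim2)

lemma right_const_eventually:
  assumes "right_const f t"
  shows "eventually (\<lambda>s. f s = f t) (at_right t)"
proof -
  obtain e where "e > 0" and const: "\<forall>s\<in>{t..t+e}. f s = f t"
    using assms unfolding right_const_def by blast
  have "f s = f t" if "s \<in> {t<..<t+e}" for s
    using const that by (meson atLeastAtMost_iff greaterThanLessThan_iff less_eq_real_def)
  then show ?thesis
    using \<open>e > 0\<close> by (intro eventually_at_rightI[of _ "t + e"]) auto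
qed

lemma real_time_induct:
  fixes P :: "real \<Rightarrow> bool"
  assumes zero: "P 0"
    and left: "\<And>t. 0 < t \<Longrightarrow> t \<le> T \<Longrightarrow> \<forall>s\<in>{0..<t}. P s \<Longrightarrow> P t"
    and right: "\<And>t. 0 \<le> t \<Longrightarrow> t < T \<Longrightarrow> \<forall>s\<in>{0..t}. P s \<Longrightarrow> eventually P (at_right t)"
    and s: "s \<in> {0..T}"
  shows "P s"
proof (rule ccontr)
  assume "\<not> P s"
  define B where "B = {s\<in>{0..T}. \<not> P s}"
  define u where "u = Inf B"
  have "s \<in> B" using s \<open>\<not> P s\<close> by (simp add: B_def)
  have "bdd_below B" by (auto simp: B_def bdd_below_def)
  then have u_le: "u \<le> b" if "b \<in> B" for b
    using that unfolding u_def by (rule cInf_lower[rotated])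
  have "0 \<le> u" unfolding u_def using \<open>s \<in> B\<close> by (intro cInf_greatest) (auto simp: B_def)
  have "u \<le> T" using u_le[OF \<open>s \<in> B\<close>] s by simp
  have below: "\<forall>r\<in>{0..<u}. P r"
    using u_le \<open>u \<le> T\<close> by (force simp: B_def)
  then have "P u"
    using zero left \<open>0 \<le> u\<close> \<open>u \<le> T\<close> by (cases "u = 0") auto
  with below have upto: "\<forall>r\<in>{0..u}. P r"
    by (auto simp: less_eq_real_def)
  have "u \<noteq> s" using \<open>P u\<close> \<open>\<not> P s\<close> by blast
  then have "u < T"
    using u_le[OF \<open>s \<in> B\<close>] s by simp
  then obtain b where "u < b" and b: "\<forall>r>u. r < b \<longrightarrow> P r"
    using right[OF \<open>0 \<le> u\<close> _ upto] unfolding eventually_at_right_field by blast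
  have "b \<le> r" if "r \<in> B" for r
    using u_le[OF that] b \<open>P u\<close> that by (force simp: B_def)
  then have "b \<le> u"
    unfolding u_def using \<open>s \<in> B\<close> by (intro cInf_greatest) auto
  with \<open>u < b\<close> show False by simp
qed

lemma step_function_induct:
  fixes F :: "(real \<Rightarrow> int) set" and P :: "real \<Rightarrow> bool"
  assumes "finite F" and right_const: "\<And>f t. f \<in> F \<Longrightarrow> 0 \<le> t \<Longrightarrow> right_const f t"
    and local: "\<And>s t. \<forall>f\<in>F. f s = f t \<Longrightarrow> P t \<Longrightarrow> P s"
    and zero: "P 0"
    and left: "\<And>t. 0 < t \<Longrightarrow> t \<le> T \<Longrightarrow> \<forall>s\<in>{0..<t}. P s \<Longrightarrow> P t"
    and s: "s \<in> {0..T}"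
  shows "P s"
  using zero left _ s
proof (rule real_time_induct)
  fix t :: real assume "0 \<le> t" "\<forall>s\<in>{0..t}. P s"
  then have "P t" by simp
  have "eventually (\<lambda>s. \<forall>f\<in>F. f s = f t) (at_right t)"
    using \<open>finite F\<close> right_const \<open>0 \<le> t\<close> by (intro eventually_ball_finite) (auto intro: right_const_eventually)
  then show "eventually P (at_right t)"
    by (rule eventually_mono) (use local \<open>P t\<close> in blast)
qed

section \<open>Trajectories and the jump rule\<close>

definition asep_jump :: "(int \<Rightarrow> real set) \<Rightarrow> (int \<Rightarrow> real set) \<Rightarrow> real \<Rightarrow> int set \<Rightarrow> int \<Rightarrow> int" where
  "asep_jump R L t occ a =
     (if t \<in> R a \<and> a + 1 \<notin> occ then a + 1 else if t \<in> L a \<and> a - 1 \<notin> occ then a - 1 else a)"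

lemma asep_jump_le:
  shows "asep_jump R L t occ a \<le> a + 1"
    and "t \<notin> R a \<or> a + 1 \<in> occ \<Longrightarrow> asep_jump R L t occ a \<le> a"
  by (auto simp: asep_jump_def)

lemma asep_jump_blocked_bond:
  shows "t \<notin> R i \<Longrightarrow> a \<le> i \<Longrightarrow> asep_jump R L t occ a \<le> i"
    and "t \<notin> L (i + 1) \<Longrightarrow> i < a \<Longrightarrow> i < asep_jump R L t occ a"
  by (cases "a = i"; auto simp: asep_jump_def) (cases "a = i + 1"; auto simp: asep_jump_def)

lemma tasep_jump:
  "L a = {} \<Longrightarrow> asep_jump R L t occ a = (if t \<in> R a \<and> a + 1 \<notin> occ then a + 1 else a)"
  by (simp add: asep_jump_def)

lemma asep_jump_strict_mono:
  assumes "b < a" "a \<in> occ" "b \<in> occ" "\<not> (t \<in> R b \<and> t \<in> L a)"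
  shows "asep_jump R L t occ b < asep_jump R L t occ a"
  using assms by (cases "a = b + 1") (auto simp: asep_jump_def)

lemma asep_jump_mono:
  assumes "a \<le> b" "\<not> (t \<in> R a \<and> t \<in> L b)"
    and "a = b \<Longrightarrow> b + 1 \<in> occ' \<Longrightarrow> a + 1 \<in> occ"
    and "a = b \<Longrightarrow> t \<in> L a \<Longrightarrow> a - 1 \<in> occ \<Longrightarrow> b - 1 \<in> occ'"
  shows "asep_jump R L t occ a \<le> asep_jump R L t occ' b"
  using assms by (cases "a = b"; cases "a = b - 1") (auto simp: asep_jump_def)

lemma clocks_ok_disjoint: "clocks_ok R L \<Longrightarrow> \<not> (t \<in> R i \<and> t \<in> L j)"
  unfolding clocks_ok_def by blast

lemma asep_traj_init: "asep_traj R L Lab x0 X \<Longrightarrow> n \<in> Lab \<Longrightarrow> X n 0 = x0 n"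
  unfolding asep_traj_def by blast

lemma asep_traj_right_const:
  "asep_traj R L Lab x0 X \<Longrightarrow> n \<in> Lab \<Longrightarrow> 0 \<le> t \<Longrightarrow> right_const (X n) t"
  unfolding asep_traj_def by blast

lemma asep_traj_has_left_val:
  assumes "asep_traj R L Lab x0 X" "n \<in> Lab" "0 < t"
  shows "has_left_val (X n) t (left_val (X n) t)"
proof -
  obtain v where "has_left_val (X n) t v"
    using assms unfolding asep_traj_def by blast
  then show ?thesis by (simp add: left_val_eq)
qed

lemma asep_traj_jump:
  assumes "asep_traj R L Lab x0 X" "n \<in> Lab" "0 < t"
  shows "X n t = asep_jump R L t ((\<lambda>m. left_val (X m) t) ` Lab) (left_val (X n) t)"
proof -
  have occ: "{left_val (X m) t | m. m \<in> Lab} = (\<lambda>m. left_val (X m) t) ` Lab" by blast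
  have "\<forall>n\<in>Lab. \<forall>t>0. X n t = asep_jump R L t {left_val (X m) t | m. m \<in> Lab} (left_val (X n) t)"
    using assms(1) unfolding asep_traj_def asep_jump_def Let_def by (elim conjE)
  then show ?thesis
    using assms(2,3) by (simp add: occ)
qed

lemma asep_traj_left_vals_inherit:
  assumes X: "asep_traj R L Lab x0 X" and Y: "asep_traj R L Lab' y0 Y"
    and "m \<in> Lab" "n \<in> Lab'" "0 < t" "\<forall>s\<in>{0..<t}. Q (X m s) (Y n s)"
  shows "Q (left_val (X m) t) (left_val (Y n) t)"
  using assms(5) asep_traj_has_left_val[OF X assms(3,5)] asep_traj_has_left_val[OF Y assms(4,5)] assms(6)
  by (rule left_vals_inherit)

section \<open>Exclusion\<close>

lemma asep_traj_order:
  assumes ok: "clocks_ok R L" and X: "asep_traj R L Lab x0 X"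
    and n: "n \<in> Lab" "n + 1 \<in> Lab" and init: "x0 (n + 1) < x0 n" and s: "0 \<le> s"
  shows "X (n + 1) s < X n s"
proof (rule step_function_induct[where P = "\<lambda>r. X (n + 1) r < X n r" and F = "{X n, X (n + 1)}" and T = s])
  show "\<And>f t. f \<in> {X n, X (n + 1)} \<Longrightarrow> 0 \<le> t \<Longrightarrow> right_const f t"
    using asep_traj_right_const[OF X] n by blast
  show "X (n + 1) 0 < X n 0"
    using init by (simp add: asep_traj_init[OF X] n)
next
  fix t assume t: "0 < t" and before: "\<forall>s\<in>{0..<t}. X (n + 1) s < X n s"
  let ?occ = "(\<lambda>m. left_val (X m) t) ` Lab"
  have "left_val (X (n + 1)) t < left_val (X n) t"
    using asep_traj_left_vals_inherit[OF X X n(2) n(1) t before] .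
  moreover have "left_val (X n) t \<in> ?occ" "left_val (X (n + 1)) t \<in> ?occ"
    using n by blast+
  ultimately have "asep_jump R L t ?occ (left_val (X (n + 1)) t) < asep_jump R L t ?occ (left_val (X n) t)"
    using clocks_ok_disjoint[OF ok] by (rule asep_jump_strict_mono)
  then show "X (n + 1) t < X n t"
    by (simp only: asep_traj_jump[OF X n(1) t, symmetric] asep_traj_jump[OF X n(2) t, symmetric])
qed (use s in auto)

lemma strict_decreasing_gap:
  fixes g :: "int \<Rightarrow> int"
  assumes dec: "\<And>k. c \<le> k \<Longrightarrow> g (k + 1) < g k" and "c \<le> m" "m \<le> n"
  shows "g n + (n - m) \<le> g m"
  using \<open>m \<le> n\<close>
proof (induction n rule: int_ge_induct[consumes 1])
  case base
  then show ?case by simp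
next
  case (step k)
  then have "g (k + 1) < g k" using dec \<open>c \<le> m\<close> by fastforce
  with step show ?case by linarith
qed

lemma strict_decreasing_succ_in_image:
  fixes g :: "int \<Rightarrow> int"
  assumes dec: "\<And>k. c \<le> k \<Longrightarrow> g (k + 1) < g k" and n: "c \<le> n"
  shows "g n + 1 \<in> g ` {k. c \<le> k} \<longleftrightarrow> c \<le> n - 1 \<and> g (n - 1) = g n + 1"
proof
  assume "g n + 1 \<in> g ` {k. c \<le> k}"
  then obtain m where m: "c \<le> m" "g m = g n + 1" by auto
  have "m < n"
  proof (rule ccontr)
    assume "\<not> m < n"
    then have "g m + (m - n) \<le> g n" using strict_decreasing_gap[of c g n m, OF dec n] by simp
    with m(2) \<open>\<not> m < n\<close> show False by linarith
  qed
  then have "g n + (n - m) \<le> g m" using strict_decreasing_gap[of c g m n, OF dec m(1)] by simp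
  with m(2) \<open>m < n\<close> have "m = n - 1" by linarith
  with m show "c \<le> n - 1 \<and> g (n - 1) = g n + 1" by simp
next
  assume "c \<le> n - 1 \<and> g (n - 1) = g n + 1"
  then show "g n + 1 \<in> g ` {k. c \<le> k}" by (metis image_eqI mem_Collect_eq)
qed

lemma strict_decreasing_pred_in_image:
  fixes g :: "int \<Rightarrow> int"
  assumes dec: "\<And>k. c \<le> k \<Longrightarrow> g (k + 1) < g k" and n: "c \<le> n"
  shows "g n - 1 \<in> g ` {k. c \<le> k} \<longleftrightarrow> g (n + 1) = g n - 1"
proof
  assume "g n - 1 \<in> g ` {k. c \<le> k}"
  then obtain m where m: "c \<le> m" "g m = g n - 1" by auto
  have "n < m"
  proof (rule ccontr)
    assume "\<not> n < m"
    then have "g n + (n - m) \<le> g m" using strict_decreasing_gap[of c g m n, OF dec m(1)] by simp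
    with m(2) \<open>\<not> n < m\<close> show False by linarith
  qed
  then have "g m + (m - (n + 1)) \<le> g (n + 1)" using strict_decreasing_gap[of c g "n + 1" m, OF dec] n by simp
  moreover have "g (n + 1) < g n" using dec n .
  ultimately have "m = n + 1" using m(2) \<open>n < m\<close> by linarith
  with m show "g (n + 1) = g n - 1" by simp
next
  assume "g (n + 1) = g n - 1"
  moreover have "c \<le> n + 1" using n by simp
  ultimately show "g n - 1 \<in> g ` {k. c \<le> k}" by (metis image_eqI mem_Collect_eq)
qed

lemma asep_traj_left_order:
  assumes ok: "clocks_ok R L" and X: "asep_traj R L {k. c \<le> k} x0 X"
    and init: "\<And>k. c \<le> k \<Longrightarrow> x0 (k + 1) < x0 k" and t: "0 < t" and n: "c \<le> n"
  shows "left_val (X (n + 1)) t < left_val (X n) t"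
proof -
  have "\<forall>s\<in>{0..<t}. X (n + 1) s < X n s"
    using n by (auto intro!: asep_traj_order[OF ok X] init)
  then show ?thesis
    using n t by (intro asep_traj_left_vals_inherit[OF X X, where Q = "(<)"]) auto
qed

lemma asep_traj_blocked_by_predecessor:
  assumes ok: "clocks_ok R L" and X: "asep_traj R L {k. c \<le> k} x0 X"
    and init: "\<And>k. c \<le> k \<Longrightarrow> x0 (k + 1) < x0 k" and t: "0 < t" and m: "c \<le> m - 1"
    and ahead: "left_val (X (m - 1)) t = a + 1" and "a \<le> left_val (X m) t"
  shows "X m t \<le> a"
proof -
  have "left_val (X m) t < a + 1"
    using asep_traj_left_order[OF ok X init t m] ahead by simp
  then have pos: "left_val (X m) t = a" using \<open>a \<le> left_val (X m) t\<close> by simp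
  have "a + 1 \<in> (\<lambda>k. left_val (X k) t) ` {k. c \<le> k}"
    using ahead m by (metis (mono_tags) image_eqI mem_Collect_eq)
  then have "asep_jump R L t ((\<lambda>k. left_val (X k) t) ` {k. c \<le> k}) a \<le> a"
    by (intro asep_jump_le(2)) simp
  moreover have "m \<in> {k. c \<le> k}" using m by simp
  ultimately show ?thesis
    using asep_traj_jump[OF X _ t, of m] pos by simp
qed

section \<open>Harris bonds and attractiveness\<close>

lemma asep_traj_blocked_bond:
  assumes X: "asep_traj R L Lab x0 X" and n: "n \<in> Lab"
    and no_rings: "(R i \<union> L (i + 1)) \<inter> {0..T} = {}" and s: "s \<in> {0..T}"
  shows "x0 n \<le> i \<Longrightarrow> X n s \<le> i" and "i < x0 n \<Longrightarrow> i < X n s"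
proof -
  have right_const: "\<And>f t. f \<in> {X n} \<Longrightarrow> 0 \<le> t \<Longrightarrow> right_const f t"
    using asep_traj_right_const[OF X n] by blast
  show "X n s \<le> i" if "x0 n \<le> i"
  proof (rule step_function_induct[where P = "\<lambda>r. X n r \<le> i" and F = "{X n}", OF _ right_const _ _ _ s])
    fix t assume t: "0 < t" "t \<le> T" and "\<forall>r\<in>{0..<t}. X n r \<le> i"
    then have "left_val (X n) t \<le> i"
      using asep_traj_left_vals_inherit[OF X X n n t(1), where Q = "\<lambda>x y. x \<le> i"] by simp
    moreover have "t \<notin> R i" using no_rings t by auto
    ultimately show "X n t \<le> i"
      unfolding asep_traj_jump[OF X n t(1)] by (rule asep_jump_blocked_bond(1)[rotated])
  qed (use that asep_traj_init[OF X n] in auto)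
  show "i < X n s" if "i < x0 n"
  proof (rule step_function_induct[where P = "\<lambda>r. i < X n r" and F = "{X n}", OF _ right_const _ _ _ s])
    fix t assume t: "0 < t" "t \<le> T" and "\<forall>r\<in>{0..<t}. i < X n r"
    then have "i < left_val (X n) t"
      using asep_traj_left_vals_inherit[OF X X n n t(1), where Q = "\<lambda>x y. i < x"] by simp
    moreover have "t \<notin> L (i + 1)" using no_rings t by auto
    ultimately show "i < X n t"
      unfolding asep_traj_jump[OF X n t(1)] by (rule asep_jump_blocked_bond(2)[rotated])
  qed (use that asep_traj_init[OF X n] in auto)
qed

lemma asep_traj_harris_barrier:
  assumes ok: "clocks_ok R L" and X: "asep_traj R L Lab x0 X"
    and tail: "\<And>m. n \<le> m \<Longrightarrow> m \<in> Lab \<and> x0 m = d - m"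
  obtains nh i where "n \<le> nh" "L (i + 1) \<inter> {0..T} = {}"
    "\<forall>s\<in>{0..T}. X (nh + 1) s \<le> i \<and> i < X nh s"
proof -
  obtain i where i: "i \<le> d - n - 1" and no_rings: "(R i \<union> L (i + 1)) \<inter> {0..T} = {}"
    using ok unfolding clocks_ok_def by blast
  define nh where "nh = d - i - 1"
  have "n \<le> nh" using i by (simp add: nh_def)
  then have "nh + 1 \<in> Lab" "x0 (nh + 1) = i" "nh \<in> Lab" "x0 nh = i + 1"
    using tail[of nh] tail[of "nh + 1"] by (auto simp: nh_def)
  then have "\<forall>s\<in>{0..T}. X (nh + 1) s \<le> i \<and> i < X nh s"
    using asep_traj_blocked_bond[OF X _ no_rings] by simp
  moreover have "L (i + 1) \<inter> {0..T} = {}" using no_rings by blast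
  ultimately show thesis using \<open>n \<le> nh\<close> that by blast
qed

text \<open>Labels beyond nh are not compared. This is harmless: X (nh + 1) stays at or left of i,
  so it can only block a left jump of X nh from i + 1, and no left clock rings there.\<close>

lemma asep_traj_compare:
  assumes ok: "clocks_ok R L"
    and X: "asep_traj R L {k. c \<le> k} x0 X" and Y: "asep_traj R L {k. c' \<le> k} y0 Y"
    and x0: "\<And>k. c \<le> k \<Longrightarrow> x0 (k + 1) < x0 k" and y0: "\<And>k. c' \<le> k \<Longrightarrow> y0 (k + 1) < y0 k"
    and "c \<le> c'" and init: "\<And>k. c' \<le> k \<Longrightarrow> k \<le> nh \<Longrightarrow> x0 k \<le> y0 k"
    and bond: "L (i + 1) \<inter> {0..T} = {}"
    and barrier: "\<forall>s\<in>{0..T}. X (nh + 1) s \<le> i \<and> i < X nh s"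
    and s: "s \<in> {0..T}" and n: "c' \<le> n" "n \<le> nh"
  shows "X n s \<le> Y n s"
proof -
  have "\<forall>k\<in>{c'..nh}. X k s \<le> Y k s"
  proof (rule step_function_induct[where P = "\<lambda>r. \<forall>k\<in>{c'..nh}. X k r \<le> Y k r"
        and F = "X ` {c'..nh} \<union> Y ` {c'..nh}", OF _ _ _ _ _ s])
    show "\<And>f t. f \<in> X ` {c'..nh} \<union> Y ` {c'..nh} \<Longrightarrow> 0 \<le> t \<Longrightarrow> right_const f t"
      using \<open>c \<le> c'\<close> by (auto intro: asep_traj_right_const[OF X] asep_traj_right_const[OF Y])
    show "\<forall>k\<in>{c'..nh}. X k 0 \<le> Y k 0"
      using \<open>c \<le> c'\<close> init by (simp add: asep_traj_init[OF X] asep_traj_init[OF Y])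
  next
    fix t assume t: "0 < t" "t \<le> T" and before: "\<forall>r\<in>{0..<t}. \<forall>k\<in>{c'..nh}. X k r \<le> Y k r"
    define gx where "gx = (\<lambda>k. left_val (X k) t)"
    define gy where "gy = (\<lambda>k. left_val (Y k) t)"
    have le: "gx k \<le> gy k" if "k \<in> {c'..nh}" for k
      unfolding gx_def gy_def using that before \<open>c \<le> c'\<close> t
      by (intro asep_traj_left_vals_inherit[OF X Y, where Q = "(\<le>)"]) auto
    have gx_dec: "\<And>k. c \<le> k \<Longrightarrow> gx (k + 1) < gx k"
      unfolding gx_def using asep_traj_left_order[OF ok X x0 t(1)] .
    have gy_dec: "\<And>k. c' \<le> k \<Longrightarrow> gy (k + 1) < gy k"
      unfolding gy_def using asep_traj_left_order[OF ok Y y0 t(1)] .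
    have "gx (nh + 1) \<le> i \<and> i < gx nh"
      unfolding gx_def using barrier t \<open>c \<le> c'\<close> n
      by (intro asep_traj_left_vals_inherit[OF X X, where Q = "\<lambda>x y. x \<le> i \<and> i < y"]) auto
    then have barrier_left: "gx nh = i + 1" if "gx (nh + 1) = gx nh - 1"
      using that by simp
    show "\<forall>k\<in>{c'..nh}. X k t \<le> Y k t"
    proof
      fix k assume k: "k \<in> {c'..nh}"
      have up: "gx k + 1 \<in> gx ` {k. c \<le> k}" if "gx k = gy k" "gy k + 1 \<in> gy ` {k. c' \<le> k}"
      proof -
        have ahead: "c' \<le> k - 1" "gy (k - 1) = gy k + 1"
          using that(2) strict_decreasing_succ_in_image[of c' gy k, OF gy_dec] k by auto
        then have "gx (k - 1) \<le> gy (k - 1)" using le[of "k - 1"] k by simp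
        moreover have "gx k < gx (k - 1)" using gx_dec[of "k - 1"] ahead(1) \<open>c \<le> c'\<close> by simp
        ultimately have "gx (k - 1) = gx k + 1" using ahead(2) that(1) by simp
        then show ?thesis
          using strict_decreasing_succ_in_image[of c gx k, OF gx_dec] ahead(1) \<open>c \<le> c'\<close> k by simp
      qed
      have down: "gy k - 1 \<in> gy ` {k. c' \<le> k}"
        if "gx k = gy k" "t \<in> L (gx k)" "gx k - 1 \<in> gx ` {k. c \<le> k}"
      proof -
        have behind: "gx (k + 1) = gx k - 1"
          using that(3) strict_decreasing_pred_in_image[of c gx k, OF gx_dec] k \<open>c \<le> c'\<close> by simp
        have "k \<noteq> nh"
        proof
          assume "k = nh"
          with behind barrier_left have "gx k = i + 1" by simp
          with that(2) t bond show False by auto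
        qed
        then have "gx (k + 1) \<le> gy (k + 1)" using le[of "k + 1"] k by simp
        moreover have "gy (k + 1) < gy k" using gy_dec k by simp
        ultimately have "gy (k + 1) = gy k - 1" using behind that(1) by simp
        then show ?thesis using strict_decreasing_pred_in_image[of c' gy k, OF gy_dec] k by simp
      qed
      have "asep_jump R L t (gx ` {k. c \<le> k}) (gx k) \<le> asep_jump R L t (gy ` {k. c' \<le> k}) (gy k)"
        using le[OF k] clocks_ok_disjoint[OF ok] up down by (rule asep_jump_mono)
      then show "X k t \<le> Y k t"
        using asep_traj_jump[OF X _ t(1), of k] asep_traj_jump[OF Y _ t(1), of k] k \<open>c \<le> c'\<close>
        unfolding gx_def gy_def by simp
    qed
  qed (simp_all add: ball_Un)
  then show ?thesis using n by simp
qed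

section \<open>Three coupled processes\<close>

locale coupled_aseps =
  fixes R L :: "int \<Rightarrow> real set" and c :: int and x0 a0 b0 :: "int \<Rightarrow> int"
    and X XA XB :: "int \<Rightarrow> real \<Rightarrow> int"
  assumes ok: "clocks_ok R L" and c_nonpos: "c \<le> 0"
    and X: "asep_traj R L {m. c \<le> m} x0 X" and A: "asep_traj R L {m. 1 \<le> m} a0 XA"
    and B: "asep_traj R L {m. c \<le> m} b0 XB"
    and x0: "\<And>m. c \<le> m \<Longrightarrow> x0 (m + 1) < x0 m" and a0: "\<And>m. 1 \<le> m \<Longrightarrow> a0 (m + 1) < a0 m"
    and b0: "\<And>m. c \<le> m \<Longrightarrow> b0 (m + 1) < b0 m"
begin

lemma X_below_XA_XB:
  assumes tail: "\<And>m. 1 \<le> m \<Longrightarrow> x0 m = d - m"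
    and init_A: "\<And>m. 1 \<le> m \<Longrightarrow> x0 m \<le> a0 m" and init_B: "\<And>m. c \<le> m \<Longrightarrow> x0 m \<le> b0 m"
    and m: "1 \<le> m" and r: "0 \<le> r"
  shows "X m r \<le> XA m r \<and> X m r \<le> XB m r"
proof -
  have "\<And>k. m \<le> k \<Longrightarrow> k \<in> {k. c \<le> k} \<and> x0 k = d - k"
    using m tail c_nonpos by auto
  then obtain nh i where "m \<le> nh" and bond: "L (i + 1) \<inter> {0..r} = {}"
    and barrier: "\<forall>s\<in>{0..r}. X (nh + 1) s \<le> i \<and> i < X nh s"
    by (rule asep_traj_harris_barrier[OF ok X])
  have "X m r \<le> XA m r"
    by (rule asep_traj_compare[OF ok X A x0 a0 _ _ bond barrier])
      (use m r \<open>m \<le> nh\<close> c_nonpos init_A in auto)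
  moreover have "X m r \<le> XB m r"
    by (rule asep_traj_compare[OF ok X B x0 b0 _ _ bond barrier])
      (use m r \<open>m \<le> nh\<close> c_nonpos init_B in auto)
  ultimately show ?thesis ..
qed

lemma tasep_front_step:
  assumes noL: "\<And>i. L i = {}" and t: "0 < t" and k: "c \<le> k" "k \<le> 0"
    and front: "\<And>m. c \<le> m \<Longrightarrow> m \<le> 0 \<Longrightarrow> left_val (X m) t = left_val (XB m) t"
  shows "X k t = XB k t"
proof -
  define gx where "gx = (\<lambda>m. left_val (X m) t)"
  define gb where "gb = (\<lambda>m. left_val (XB m) t)"
  have gx_dec: "\<And>m. c \<le> m \<Longrightarrow> gx (m + 1) < gx m"
    unfolding gx_def using asep_traj_left_order[OF ok X x0 t] .
  have gb_dec: "\<And>m. c \<le> m \<Longrightarrow> gb (m + 1) < gb m"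
    unfolding gb_def using asep_traj_left_order[OF ok B b0 t] .
  have same: "gx m = gb m" if "c \<le> m" "m \<le> 0" for m
    unfolding gx_def gb_def using front that .
  have "gx k + 1 \<in> gx ` {m. c \<le> m} \<longleftrightarrow> gb k + 1 \<in> gb ` {m. c \<le> m}"
    using strict_decreasing_succ_in_image[of c gx k, OF gx_dec k(1)]
      strict_decreasing_succ_in_image[of c gb k, OF gb_dec k(1)] same[of "k - 1"] same[OF k] k(2)
    by auto
  then show ?thesis
    using asep_traj_jump[OF X _ t, of k] asep_traj_jump[OF B _ t, of k] same[OF k] k(1)
    unfolding gx_def gb_def by (simp add: tasep_jump noL)
qed

lemma blocked_min:
  assumes t: "0 < t" and k: "1 \<le> k"
    and front: "\<And>m. c \<le> m \<Longrightarrow> m \<le> 0 \<Longrightarrow> left_val (X m) t = left_val (XB m) t"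
    and tail: "\<And>m. 1 \<le> m \<Longrightarrow> m \<le> k \<Longrightarrow>
                 left_val (X m) t = min (left_val (XA m) t) (left_val (XB m) t)"
    and blocked: "left_val (X k) t + 1 \<in> (\<lambda>m. left_val (X m) t) ` {m. c \<le> m}"
  shows "XA k t \<le> left_val (X k) t \<or> XB k t \<le> left_val (X k) t"
proof -
  define a where "a = left_val (X k) t"
  have "a \<le> left_val (XA k) t" "a \<le> left_val (XB k) t"
    using tail[of k] k by (simp_all add: a_def)
  note follow_A = asep_traj_blocked_by_predecessor[OF ok A a0 t _ _ this(1)]
    and follow_B = asep_traj_blocked_by_predecessor[OF ok B b0 t _ _ this(2)]
  have ahead: "c \<le> k - 1" "left_val (X (k - 1)) t = a + 1"
    using blocked strict_decreasing_succ_in_image[of c "\<lambda>m. left_val (X m) t" k,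
        OF asep_traj_left_order[OF ok X x0 t]] k c_nonpos
    unfolding a_def by auto
  show ?thesis
  proof (cases "k - 1 \<le> 0")
    case True
    then have "left_val (XB (k - 1)) t = a + 1" using front ahead by simp
    then show ?thesis using follow_B ahead(1) by (simp add: a_def)
  next
    case False
    then have "min (left_val (XA (k - 1)) t) (left_val (XB (k - 1)) t) = a + 1"
      using tail[of "k - 1"] ahead(2) by simp
    then consider "left_val (XA (k - 1)) t = a + 1" | "left_val (XB (k - 1)) t = a + 1"
      by (metis min_def)
    then show ?thesis
      using follow_A follow_B False ahead(1) by cases (simp_all add: a_def)
  qed
qed

lemma tasep_tail_step:
  assumes noL: "\<And>i. L i = {}" and t: "0 < t" and k: "1 \<le> k"
    and front: "\<And>m. c \<le> m \<Longrightarrow> m \<le> 0 \<Longrightarrow> left_val (X m) t = left_val (XB m) t"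
    and tail: "\<And>m. 1 \<le> m \<Longrightarrow> m \<le> k \<Longrightarrow>
                 left_val (X m) t = min (left_val (XA m) t) (left_val (XB m) t)"
  shows "min (XA k t) (XB k t) \<le> X k t"
proof -
  define a where "a = left_val (X k) t"
  define occ where "occ = (\<lambda>m. left_val (X m) t) ` {m. c \<le> m}"
  have a: "a = min (left_val (XA k) t) (left_val (XB k) t)"
    using tail[of k] k by (simp add: a_def)
  have kX: "k \<in> {m. c \<le> m}" and kA: "k \<in> {m. 1 \<le> m}" using k c_nonpos by auto
  have X_t: "X k t = (if t \<in> R a \<and> a + 1 \<notin> occ then a + 1 else a)"
    using asep_traj_jump[OF X kX t] unfolding a_def occ_def by (simp add: tasep_jump noL)
  have A_t: "XA k t \<le> left_val (XA k) t + 1" "t \<notin> R (left_val (XA k) t) \<Longrightarrow> XA k t \<le> left_val (XA k) t"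
    unfolding asep_traj_jump[OF A kA t] by (simp_all add: asep_jump_le)
  have B_t: "XB k t \<le> left_val (XB k) t + 1" "t \<notin> R (left_val (XB k) t) \<Longrightarrow> XB k t \<le> left_val (XB k) t"
    unfolding asep_traj_jump[OF B kX t] by (simp_all add: asep_jump_le)
  consider (jump) "t \<in> R a \<and> a + 1 \<notin> occ" | (no_ring) "t \<notin> R a" | (blocked) "a + 1 \<in> occ"
    by blast
  then show ?thesis
  proof cases
    case jump
    then show ?thesis using X_t A_t(1) B_t(1) a by (auto simp: min_def)
  next
    case no_ring
    then show ?thesis using X_t A_t(2) B_t(2) a by (auto simp: min_def)
  next
    case blocked
    then have "XA k t \<le> a \<or> XB k t \<le> a"
      using blocked_min[OF t k front tail] unfolding a_def occ_def by simp
    then show ?thesis using X_t blocked by auto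
  qed
qed

lemma tasep_min_coupling:
  assumes noL: "\<And>i. L i = {}"
    and init_front: "\<And>m. c \<le> m \<Longrightarrow> m \<le> 0 \<Longrightarrow> x0 m = b0 m"
    and init_tail: "\<And>m. 1 \<le> m \<Longrightarrow> x0 m = min (a0 m) (b0 m)"
    and below: "\<And>m r. 1 \<le> m \<Longrightarrow> 0 \<le> r \<Longrightarrow> X m r \<le> XA m r \<and> X m r \<le> XB m r"
    and n: "1 \<le> n" and s: "0 \<le> s"
  shows "X n s = min (XA n s) (XB n s)"
proof -
  define P where "P r \<longleftrightarrow> (\<forall>m\<in>{c..n}. (m \<le> 0 \<longrightarrow> X m r = XB m r) \<and>
                              (1 \<le> m \<longrightarrow> X m r = min (XA m r) (XB m r)))" for r
  have "P s"
  proof (rule step_function_induct[where F = "X ` {c..n} \<union> XB ` {c..n} \<union> XA ` {1..n}" and T = s])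
    show "\<And>f r. f \<in> X ` {c..n} \<union> XB ` {c..n} \<union> XA ` {1..n} \<Longrightarrow> 0 \<le> r \<Longrightarrow> right_const f r"
      using c_nonpos by (auto intro: asep_traj_right_const[OF X] asep_traj_right_const[OF A] asep_traj_right_const[OF B])
    show "P 0"
      unfolding P_def using c_nonpos init_front init_tail
      by (simp add: asep_traj_init[OF X] asep_traj_init[OF A] asep_traj_init[OF B])
  next
    fix t assume t: "0 < t" "t \<le> s" and before: "\<forall>r\<in>{0..<t}. P r"
    have front: "left_val (X m) t = left_val (XB m) t" if "c \<le> m" "m \<le> 0" for m
      using that before n t unfolding P_def
      by (intro asep_traj_left_vals_inherit[OF X B, where Q = "(=)"]) auto
    have tail: "left_val (X m) t = min (left_val (XA m) t) (left_val (XB m) t)"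
      if "1 \<le> m" "m \<le> n" for m
    proof (rule left_vals_inherit[where Q = "(=)", OF t(1)])
      show "has_left_val (X m) t (left_val (X m) t)"
        using that c_nonpos by (intro asep_traj_has_left_val[OF X _ t(1)]) simp
      show "has_left_val (\<lambda>r. min (XA m r) (XB m r)) t (min (left_val (XA m) t) (left_val (XB m) t))"
        using that c_nonpos
        by (intro has_left_val_min asep_traj_has_left_val[OF A _ t(1)] asep_traj_has_left_val[OF B _ t(1)]) simp_all
      show "\<forall>r\<in>{0..<t}. X m r = min (XA m r) (XB m r)"
        using that before c_nonpos unfolding P_def by auto
    qed
    show "P t"
      unfolding P_def
    proof (intro ballI conjI impI)
      fix m assume "m \<in> {c..n}" "m \<le> 0"
      then show "X m t = XB m t"
        using tasep_front_step[OF noL t(1) _ _ front] by simp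
    next
      fix m assume m: "m \<in> {c..n}" "1 \<le> m"
      then have "min (XA m t) (XB m t) \<le> X m t"
        using tasep_tail_step[OF noL t(1) _ front tail] by simp
      moreover have "X m t \<le> XA m t" "X m t \<le> XB m t"
        using below[of m t] m(2) t(1) by simp_all
      ultimately show "X m t = min (XA m t) (XB m t)" by (simp add: order.eq_iff)
    qed
  qed (use s in \<open>simp_all add: P_def ball_Un\<close>)
  then show ?thesis
    using n c_nonpos unfolding P_def by simp
qed

end

theorem proposition2:
  fixes p C t :: real and R L :: "int \<Rightarrow> real set"
    and X XA XB :: "int \<Rightarrow> real \<Rightarrow> int"
  defines "q \<equiv> 1 - p"
  defines "N \<equiv> \<lfloor>(p - q) * (t - C * sqrt t)\<rfloor>"
  assumes "1/2 < p" and "p \<le> 1" and "t > 0" and "N \<ge> 0"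
    and "clocks_ok R L"
    and "p = 1 \<Longrightarrow> (\<forall>i. L i = {})"
    and "asep_traj R L {n. n \<ge> -N} (\<lambda>n. if n \<ge> 1 then -n - N else -n) X"
    and "asep_traj R L {n. n \<ge> 1} (\<lambda>n. -n - N) XA"
    and "asep_traj R L {n. n \<ge> -N} (\<lambda>n. -n) XB"
  shows "\<forall>n\<ge>1. \<forall>s\<ge>0.
           (p = 1 \<longrightarrow> min (XA n s) (XB n s) = X n s) \<and>
           min (XA n s) (XB n s) \<ge> X n s"
proof -
  interpret coupled_aseps R L "-N" "\<lambda>n. if n \<ge> 1 then -n - N else -n" "\<lambda>n. -n - N" "\<lambda>n. -n"
      X XA XB
    using \<open>clocks_ok R L\<close> assms(9-11) \<open>N \<ge> 0\<close> by unfold_locales auto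
  have below: "X m r \<le> XA m r \<and> X m r \<le> XB m r" if "1 \<le> m" "0 \<le> r" for m r
    using that \<open>N \<ge> 0\<close> by (intro X_below_XA_XB[of "-N"]) auto
  have "X m r = min (XA m r) (XB m r)" if "p = 1" "1 \<le> m" "0 \<le> r" for m r
    using tasep_min_coupling[OF _ _ _ below that(2,3)] \<open>p = 1 \<Longrightarrow> \<forall>i. L i = {}\<close>[OF that(1)] \<open>N \<ge> 0\<close>
    by simp
  with below show ?thesis by simp
qed

end
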